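(* Let $\mathbf{w}=(\mathbf{w}_1,\dots,\mathbf{w}_{d+1})\in\mathbb{R}^{d+1}$ with $\|\mathbf{w}\|_2=1$, $\mathbf{w}_1\le 1/\sqrt2$, $\mathbf{w}_2=\dots=\mathbf{w}_{d+1}$ and $|\mathbf{w}_2|\ge 1/\sqrt{2d}$. If $\epsilon_\infty\ge\frac{2}{d}\epsilon_1$ and $\epsilon_\infty\ge\sqrt{\frac{2}{d}}\,\epsilon_2$, then the $\ell_\infty$-player dominates the $\ell_1$-player and the $\ell_2$-player, i.e. for every $(\mathbf{x},y)$, $1-y\mathbf{w}^\top(\mathbf{x}+\boldsymbol{\delta}_\infty)>1-y\mathbf{w}^\top(\mathbf{x}+\boldsymbol{\delta}_1)$ and $1-y\mathbf{w}^\top(\mathbf{x}+\boldsymbol{\delta}_\infty)>1-y\mathbf{w}^\top(\mathbf{x}+\boldsymbol{\delta}_2)$; in other words, the MAX/MSD training procedure for the soft-SVM model cannot converge.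
   Context: For $\mathbf{x}\in\mathbb{R}^{d+1}$, $y\in\{-1,+1\}$ and weights $\mathbf{w}$, the three players' (optimal) perturbations are $\boldsymbol{\delta}_\infty=-y\epsilon_\infty\operatorname{sign}(\mathbf{w})$, $\boldsymbol{\delta}_1=-y\epsilon_1\mathbf{w}/\|\mathbf{w}\|_1$, $\boldsymbol{\delta}_2=-y\epsilon_2\mathbf{w}/\|\mathbf{w}\|_2$, with budgets $\epsilon_1,\epsilon_2,\epsilon_\infty>0$. The soft-SVM model with MAX/MSD updates at each step the unit-norm weights using only the perturbation that incurs the largest soft-SVM loss $\max(0,1-y\mathbf{w}^\top(\mathbf{x}+\boldsymbol{\delta}))$. *)

theory Defs
  imports Complex_Main
begin

(* Vectors in R^(d+1) are represented as functions nat => real,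
   with coordinates indexed by {1..d+1} (coordinate i = w_i of the paper). *)

definition dotp :: "nat \<Rightarrow> (nat \<Rightarrow> real) \<Rightarrow> (nat \<Rightarrow> real) \<Rightarrow> real" where
  "dotp d u v = (\<Sum>i=1..d+1. u i * v i)"

definition norm1 :: "nat \<Rightarrow> (nat \<Rightarrow> real) \<Rightarrow> real" where
  "norm1 d w = (\<Sum>i=1..d+1. \<bar>w i\<bar>)"

definition norm2 :: "nat \<Rightarrow> (nat \<Rightarrow> real) \<Rightarrow> real" where
  "norm2 d w = sqrt (\<Sum>i=1..d+1. (w i)^2)"

definition delta_inf :: "real \<Rightarrow> real \<Rightarrow> (nat \<Rightarrow> real) \<Rightarrow> (nat \<Rightarrow> real)" where
  "delta_inf eps y w = (\<lambda>i. - y * eps * sgn (w i))"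

definition delta_1 :: "nat \<Rightarrow> real \<Rightarrow> real \<Rightarrow> (nat \<Rightarrow> real) \<Rightarrow> (nat \<Rightarrow> real)" where
  "delta_1 d eps y w = (\<lambda>i. - y * eps * w i / norm1 d w)"

definition delta_2 :: "nat \<Rightarrow> real \<Rightarrow> real \<Rightarrow> (nat \<Rightarrow> real) \<Rightarrow> (nat \<Rightarrow> real)" where
  "delta_2 d eps y w = (\<lambda>i. - y * eps * w i / norm2 d w)"

definition margin_loss :: "nat \<Rightarrow> (nat \<Rightarrow> real) \<Rightarrow> (nat \<Rightarrow> real) \<Rightarrow> real \<Rightarrow> (nat \<Rightarrow> real) \<Rightarrow> real" where
  "margin_loss d w x y \<delta> = 1 - y * dotp d w (\<lambda>i. x i + \<delta> i)"

end

theory Submission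
  imports Defs
begin

text \<open>Against the perturbations of the three players the soft-SVM margin loss exceeds the clean
  loss by the dual-norm terms \<open>\<epsilon>\<^sub>\<infinity> \<parallel>w\<parallel>\<^sub>1\<close>, \<open>\<epsilon>\<^sub>1 \<parallel>w\<parallel>\<^sub>2\<^sup>2 / \<parallel>w\<parallel>\<^sub>1\<close> and \<open>\<epsilon>\<^sub>2 \<parallel>w\<parallel>\<^sub>2\<close>. For a unit
  weight vector whose last \<open>d\<close> coordinates are equal and not too small, \<open>\<parallel>w\<parallel>\<^sub>1\<^sup>2 > d/2\<close>, and the
  budget conditions then make the \<open>\<epsilon>\<^sub>\<infinity>\<close> term strictly the largest.\<close>

lemma dotp_add_right: "dotp d w (\<lambda>i. x i + e i) = dotp d w x + dotp d w e"
  by (simp add: dotp_def distrib_left sum.distrib)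

lemma dotp_self: "dotp d w w = norm2 d w ^ 2"
  by (simp add: dotp_def norm2_def power2_eq_square sum_nonneg)

lemma dotp_scale_right: "dotp d w (\<lambda>i. c * v i) = c * dotp d w v"
  unfolding dotp_def sum_distrib_left by (simp only: mult.left_commute)

lemma margin_loss_perturbed:
  "margin_loss d w x y \<delta> = margin_loss d w x y (\<lambda>_. 0) - y * dotp d w \<delta>"
  by (simp add: margin_loss_def dotp_add_right algebra_simps)

lemma dotp_sgn: "dotp d w (\<lambda>i. sgn (w i)) = norm1 d w"
  by (simp add: dotp_def norm1_def abs_sgn)

lemma dotp_delta_inf: "dotp d w (delta_inf eps y w) = - y * eps * norm1 d w"
proof -
  have "dotp d w (delta_inf eps y w) = dotp d w (\<lambda>i. (- y * eps) * sgn (w i))"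
    by (simp add: delta_inf_def)
  also have "\<dots> = - y * eps * norm1 d w"
    unfolding dotp_scale_right dotp_sgn ..
  finally show ?thesis .
qed

lemma dotp_delta_1: "dotp d w (delta_1 d eps y w) = - y * eps * norm2 d w ^ 2 / norm1 d w"
proof -
  have "dotp d w (delta_1 d eps y w) = dotp d w (\<lambda>i. (- y * eps / norm1 d w) * w i)"
    by (simp add: delta_1_def)
  also have "\<dots> = - y * eps * norm2 d w ^ 2 / norm1 d w"
    unfolding dotp_scale_right dotp_self by simp
  finally show ?thesis .
qed

lemma dotp_delta_2: "dotp d w (delta_2 d eps y w) = - y * eps * norm2 d w"
proof -
  have "dotp d w (delta_2 d eps y w) = dotp d w (\<lambda>i. (- y * eps / norm2 d w) * w i)"
    by (simp add: delta_2_def)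
  also have "\<dots> = - y * eps * norm2 d w"
    unfolding dotp_scale_right dotp_self by (simp add: power2_eq_square)
  finally show ?thesis .
qed

lemma
  assumes "y\<^sup>2 = 1"
  shows margin_loss_delta_inf:
      "margin_loss d w x y (delta_inf eps y w) = margin_loss d w x y (\<lambda>_. 0) + eps * norm1 d w"
    and margin_loss_delta_1:
      "margin_loss d w x y (delta_1 d eps y w) =
         margin_loss d w x y (\<lambda>_. 0) + eps * norm2 d w ^ 2 / norm1 d w"
    and margin_loss_delta_2:
      "margin_loss d w x y (delta_2 d eps y w) = margin_loss d w x y (\<lambda>_. 0) + eps * norm2 d w"
  using assms
  by (subst margin_loss_perturbed;
      simp add: dotp_delta_inf dotp_delta_1 dotp_delta_2 power2_eq_square algebra_simps)+

lemma sum_head_const_tail: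
  assumes "\<forall>i\<in>{2..d+1}. w i = w 2"
  shows "(\<Sum>i=1..d+1. f (w i)) = f (w 1) + real d * (f (w 2) :: real)"
proof -
  have "(\<Sum>i=1..d+1. f (w i)) = f (w 1) + (\<Sum>i=2..d+1. f (w i))"
    by (simp add: sum.atLeast_Suc_atMost numeral_2_eq_2)
  also have "(\<Sum>i=2..d+1. f (w i)) = (\<Sum>i=2..d+1. f (w 2))"
    by (intro sum.cong refl) (metis assms)
  also have "\<dots> = real d * f (w 2)"
    by simp
  finally show ?thesis .
qed

lemma norm1_sq_gt_half_dim:
  assumes "d \<ge> 1" and "norm2 d w = 1"
    and tail: "\<forall>i\<in>{2..d+1}. w i = w 2"
    and "\<bar>w 2\<bar> \<ge> 1 / sqrt (2 * real d)"
  shows "norm1 d w ^ 2 > real d / 2"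
proof -
  have d_pos: "real d > 0" using assms(1) by simp
  have norm1_eq: "norm1 d w = \<bar>w 1\<bar> + real d * \<bar>w 2\<bar>"
    using sum_head_const_tail[OF tail, of abs] by (simp add: norm1_def)
  have tail_sq: "real d * (w 2)\<^sup>2 = 1 - (w 1)\<^sup>2"
    using assms(2) sum_head_const_tail[OF tail, of "\<lambda>t. t\<^sup>2"]
    by (simp add: norm2_def sum_nonneg)
  have "(1 / sqrt (2 * real d))\<^sup>2 \<le> \<bar>w 2\<bar>\<^sup>2"
    using assms(4) by (intro power_mono) auto
  then have "real d * (w 2)\<^sup>2 \<ge> 1 / 2"
    using d_pos by (simp add: power_divide field_simps)
  then have head_small: "(w 1)\<^sup>2 \<le> 1 / 2"
    using tail_sq by linarith
  have "(real d + 1) / 2 \<le> real d - (real d - 1) * (w 1)\<^sup>2"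
    using assms(1) mult_left_mono[OF head_small, of "real d - 1"] by simp
  also have "\<dots> = (w 1)\<^sup>2 + real d * (real d * (w 2)\<^sup>2)"
    unfolding tail_sq by (simp add: algebra_simps)
  also have "\<dots> \<le> norm1 d w ^ 2"
    using d_pos unfolding norm1_eq by (simp add: power2_eq_square algebra_simps)
  finally show ?thesis by simp
qed

lemma budget_inf_dominates_1:
  fixes n N e1 einf :: real
  assumes "N\<^sup>2 > n / 2" and "n > 0" and "N > 0" and "e1 > 0" and "einf \<ge> 2 / n * e1"
  shows "einf * N > e1 / N"
proof -
  have "2 / n * N\<^sup>2 > 1"
    using assms(1,2) by (simp add: field_simps)
  from mult_strict_left_mono[OF this assms(4)] have "e1 < e1 * (2 / n * N\<^sup>2)"
    by simp
  also have "\<dots> = (2 / n * e1) * N\<^sup>2"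
    by (simp only: ac_simps)
  also have "\<dots> \<le> einf * N\<^sup>2"
    using assms(5) by (intro mult_right_mono) auto
  finally show ?thesis
    using assms(3) by (simp add: field_simps power2_eq_square)
qed

lemma budget_inf_dominates_2:
  fixes n N e2 einf :: real
  assumes "N\<^sup>2 > n / 2" and "n > 0" and "N > 0" and "e2 > 0" and "einf \<ge> sqrt (2 / n) * e2"
  shows "einf * N > e2"
proof -
  have "2 / n * N\<^sup>2 > 1"
    using assms(1,2) by (simp add: field_simps)
  then have "sqrt (2 / n * N\<^sup>2) > 1"
    by simp
  also have "sqrt (2 / n * N\<^sup>2) = sqrt (2 / n) * N"
    using assms(3) by (simp only: real_sqrt_mult real_sqrt_abs abs_of_pos)
  finally have "sqrt (2 / n) * N > 1" .
  from mult_strict_left_mono[OF this assms(4)] have "e2 < e2 * (sqrt (2 / n) * N)"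
    by simp
  also have "\<dots> = (sqrt (2 / n) * e2) * N"
    by (simp only: ac_simps)
  also have "\<dots> \<le> einf * N"
    using assms(3,5) by (intro mult_right_mono) auto
  finally show ?thesis .
qed

theorem lemma6:
  fixes d :: nat and w :: "nat \<Rightarrow> real" and eps1 eps2 epsinf :: real
  assumes "d \<ge> 1"
    and "norm2 d w = 1"
    and "w 1 \<le> 1 / sqrt 2"
    and "\<forall>i\<in>{2..d+1}. w i = w 2"
    and "\<bar>w 2\<bar> \<ge> 1 / sqrt (2 * real d)"
    and "eps1 > 0" and "eps2 > 0" and "epsinf > 0"
    and "epsinf \<ge> (2 / real d) * eps1"
    and "epsinf \<ge> sqrt (2 / real d) * eps2"
  shows "\<forall>(x :: nat \<Rightarrow> real) (y :: real). y \<in> {-1, 1} \<longrightarrow>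
      margin_loss d w x y (delta_inf epsinf y w) > margin_loss d w x y (delta_1 d eps1 y w) \<and>
      margin_loss d w x y (delta_inf epsinf y w) > margin_loss d w x y (delta_2 d eps2 y w)"
proof (intro allI impI)
  fix x :: "nat \<Rightarrow> real" and y :: real
  assume "y \<in> {-1, 1}"
  then have y_sq: "y\<^sup>2 = 1" by auto
  have N_sq: "norm1 d w ^ 2 > real d / 2"
    using norm1_sq_gt_half_dim[OF assms(1,2,4,5)] .
  have d_pos: "real d > 0" using assms(1) by simp
  have "norm1 d w \<ge> 0"
    by (simp add: norm1_def sum_nonneg)
  with N_sq d_pos have N_pos: "norm1 d w > 0"
    by (cases "norm1 d w = 0") auto
  show "margin_loss d w x y (delta_inf epsinf y w) > margin_loss d w x y (delta_1 d eps1 y w) \<and>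
      margin_loss d w x y (delta_inf epsinf y w) > margin_loss d w x y (delta_2 d eps2 y w)"
    using budget_inf_dominates_1[OF N_sq d_pos N_pos assms(6,9)]
      budget_inf_dominates_2[OF N_sq d_pos N_pos assms(7,10)]
    by (simp add: margin_loss_delta_inf[OF y_sq] margin_loss_delta_1[OF y_sq]
        margin_loss_delta_2[OF y_sq] assms(2))
qed

end
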